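(* Let $n\ge2$, $s\in\mathbb{R}$, $0\le b<\frac12$ and $0<\varepsilon\le1-2b$. For $(\xi',\xi_n,\tau)\in\mathbb{R}^{n-1}\times\mathbb{R}\times\mathbb{R}$ define $$Q_1(\xi',\xi_n,\tau)=\chi_{\{1<\xi_n^2\le\frac12|\tau+\xi'^2|\}}\frac{(1+\xi'^2+|\tau+\xi'^2|)^s(1+|\tau+\xi'^2|)^{1/2}\xi_n}{(1+|\tau+\xi'^2+\xi_n^2|)^{2-\varepsilon}}.$$ Then for all $(\xi',\xi_n,\tau)\in\mathbb{R}^{n+1}$, $$Q_1\lesssim\begin{cases}(1+\xi'^2+\xi_n^2)^s(1+|\tau+\xi'^2+\xi_n^2|)^{-2b},&-\frac12\le s\le\frac12,\\ \big[(1+\xi'^2+\xi_n^2)^s+(1+|\tau|)^s\big](1+|\tau+\xi'^2+\xi_n^2|)^{-2b},&s<-\frac12\text{ or }s>\frac12.\end{cases}$$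
   Context: $\xi'^2=|\xi'|^2$; $\chi_A$ is the characteristic function of the set $A$ (here the set of $(\xi',\xi_n,\tau)$ with $1<\xi_n^2\le\frac12|\tau+\xi'^2|$). *)

theory Defs
  imports "HOL-Analysis.Analysis"
begin

text \<open>The multiplier Q_1 at a point (xi', xi_n, tau); xi' in R^(n-1) is a vector of type real^'n,
  only its squared Euclidean norm enters.\<close>
definition Q1 :: "real \<Rightarrow> real \<Rightarrow> real ^ 'n \<Rightarrow> real \<Rightarrow> real \<Rightarrow> real" where
  "Q1 s \<epsilon> \<xi>' \<xi>n \<tau> =
     (if 1 < \<xi>n\<^sup>2 \<and> \<xi>n\<^sup>2 \<le> \<bar>\<tau> + (norm \<xi>')\<^sup>2\<bar> / 2
      then (1 + (norm \<xi>')\<^sup>2 + \<bar>\<tau> + (norm \<xi>')\<^sup>2\<bar>) powr s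
           * (1 + \<bar>\<tau> + (norm \<xi>')\<^sup>2\<bar>) powr (1/2) * \<xi>n
           / (1 + \<bar>\<tau> + (norm \<xi>')\<^sup>2 + \<xi>n\<^sup>2\<bar>) powr (2 - \<epsilon>)
      else 0)"

definition Q1_bound :: "real \<Rightarrow> real \<Rightarrow> real ^ 'n \<Rightarrow> real \<Rightarrow> real \<Rightarrow> real" where
  "Q1_bound s b \<xi>' \<xi>n \<tau> =
     (if -1/2 \<le> s \<and> s \<le> 1/2
      then (1 + (norm \<xi>')\<^sup>2 + \<xi>n\<^sup>2) powr s
           * (1 + \<bar>\<tau> + (norm \<xi>')\<^sup>2 + \<xi>n\<^sup>2\<bar>) powr (-2 * b)
      else ((1 + (norm \<xi>')\<^sup>2 + \<xi>n\<^sup>2) powr s + (1 + \<bar>\<tau>\<bar>) powr s)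
           * (1 + \<bar>\<tau> + (norm \<xi>')\<^sup>2 + \<xi>n\<^sup>2\<bar>) powr (-2 * b))"

end

theory Submission
  imports Defs
begin

(* Write a = |xi'|^2, t = tau + a and D = 1 + |t + xi_n^2|. On the support of Q1 we have
   xi_n^2 <= |t|/2, hence 1 + |t| <= 2 D, and Q1 factors as
     (1 + a + |t|)^s (1 + |t|)^(-1/2) xi_n  *  (1 + |t|) / D^(2 - eps).
   The second factor is at most 2 D^(-2b) because 2 - eps >= 1 + 2b. In the first factor
   xi_n <= (1 + |t|)^(1/2). For s <= 0 it then suffices that 1 + a + |t| >= 1 + a + xi_n^2; for
   0 < s <= 1/2 the mediant inequality (1 + a + |t|)/(1 + a + xi_n^2) <= (1 + |t|)/(1 + xi_n^2)
   leaves the factor xi_n / (1 + xi_n^2)^(1/2) <= 1; for s > 1/2 we use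
   1 + a + |t| <= 3 max (1 + a + xi_n^2) (1 + |tau|). *)

lemma one_add_abs_le_two_mult_one_add_abs_add:
  fixes t y :: real
  assumes "0 \<le> y" and "y \<le> \<bar>t\<bar> / 2"
  shows "1 + \<bar>t\<bar> \<le> 2 * (1 + \<bar>t + y\<bar>)"
  using assms abs_triangle_ineq4[of "t + y" y] by auto

lemma divide_powr_le_mult_powr_uminus:
  fixes T D c p q :: real
  assumes "1 \<le> D" and "0 \<le> T" and "T \<le> c * D" and "q + 1 \<le> p"
  shows "T / D powr p \<le> c * D powr (- q)"
proof -
  have "c \<ge> 0"
    using assms(1-3) by (smt (verit) zero_le_mult_iff)
  have "T / D powr p \<le> c * D / D powr p"
    using assms(1,3) by (intro divide_right_mono) auto
  also have "\<dots> = c * D powr (1 - p)"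
    using assms(1) by (simp add: powr_diff)
  also have "\<dots> \<le> c * D powr (- q)"
    using assms(1,4) \<open>c \<ge> 0\<close> by (intro mult_left_mono powr_mono) auto
  finally show ?thesis .
qed

lemma sqrt_weight_le_one:
  fixes x T :: real
  assumes "0 \<le> x" and "x\<^sup>2 \<le> T"
  shows "T powr (1/2) * x / T \<le> 1"
proof -
  have "0 \<le> T"
    using assms(2) zero_le_power2 order.trans by blast
  moreover have "x \<le> sqrt T"
    using assms real_le_rsqrt by blast
  ultimately have "sqrt T * x \<le> sqrt T * sqrt T"
    by (intro mult_left_mono) auto
  with \<open>0 \<le> T\<close> show ?thesis
    by (simp add: powr_half_sqrt divide_le_eq)
qed

lemma one_add_add_divide_le:
  fixes a y u :: real
  assumes "0 \<le> a" and "0 \<le> y" and "y \<le> u"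
  shows "(1 + a + u) / (1 + a + y) \<le> (1 + u) / (1 + y)"
proof -
  have "a * y \<le> a * u"
    using assms by (intro mult_left_mono)
  then show ?thesis
    using assms by (simp add: divide_simps algebra_simps)
qed

lemma powr_mult_sqrt_weight_le_of_le_half:
  fixes s a x u :: real
  assumes "s \<le> 1/2" and "0 \<le> a" and "0 \<le> x" and "x\<^sup>2 \<le> u"
  shows "(1 + a + u) powr s * ((1 + u) powr (1/2) * x / (1 + u)) \<le> (1 + a + x\<^sup>2) powr s"
    (is "_ * ?W \<le> _")
proof -
  have B_pos: "0 < 1 + a + x\<^sup>2" and x2_pos: "0 < 1 + x\<^sup>2" and u_pos: "0 < 1 + u"
    using assms(2,4) zero_le_power2[of x] by linarith+
  show ?thesis
  proof (cases "s \<le> 0")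
    case True
    have "(1 + a + u) powr s \<le> (1 + a + x\<^sup>2) powr s"
      using True assms(4) B_pos by (intro powr_mono2') auto
    moreover have "?W \<le> 1"
      using assms(3,4) by (intro sqrt_weight_le_one) auto
    ultimately have "(1 + a + u) powr s * ?W \<le> (1 + a + x\<^sup>2) powr s * 1"
      using assms(3) u_pos by (intro mult_mono) auto
    then show ?thesis
      by simp
  next
    case False
    define R where "R = (1 + u) / (1 + x\<^sup>2)"
    have "1 \<le> R"
      unfolding R_def using assms(4) x2_pos by (simp add: le_divide_eq_1_pos)
    have "R powr (1/2) * ?W \<le> 1"
    proof -
      define p q where "p = (1 + x\<^sup>2) powr (1/2)" and "q = (1 + u) powr (1/2)"
      have "R powr (1/2) = q / p"
        using u_pos x2_pos by (simp add: R_def powr_divide p_def q_def)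
      moreover have "1 + u = q * q"
        using u_pos by (simp add: q_def powr_add[symmetric])
      moreover have "0 < q"
        using u_pos by (simp add: q_def)
      ultimately have "R powr (1/2) * ?W = x / p"
        unfolding q_def[symmetric] by simp
      also have "\<dots> \<le> 1"
        using assms(3) x2_pos real_le_rsqrt[of x "1 + x\<^sup>2"] by (simp add: p_def powr_half_sqrt)
      finally show ?thesis .
    qed
    have "1 + a + u \<le> (1 + a + x\<^sup>2) * R"
      using one_add_add_divide_le[OF assms(2) zero_le_power2 assms(4)] B_pos
      by (simp add: R_def divide_le_eq mult.commute)
    then have "(1 + a + u) powr s \<le> ((1 + a + x\<^sup>2) * R) powr s"
      using False assms(2) u_pos by (intro powr_mono2) auto
    also have "\<dots> = (1 + a + x\<^sup>2) powr s * R powr s"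
      using B_pos \<open>1 \<le> R\<close> by (simp add: powr_mult)
    also have "\<dots> \<le> (1 + a + x\<^sup>2) powr s * R powr (1/2)"
      using \<open>1 \<le> R\<close> assms(1) by (intro mult_left_mono powr_mono) auto
    finally have "(1 + a + u) powr s * ?W \<le> (1 + a + x\<^sup>2) powr s * R powr (1/2) * ?W"
      using assms(3) u_pos by (intro mult_right_mono) auto
    also have "\<dots> \<le> (1 + a + x\<^sup>2) powr s"
      using mult_left_mono[OF \<open>R powr (1/2) * ?W \<le> 1\<close> powr_ge_zero]
      by (simp only: mult.assoc mult_1_right)
    finally show ?thesis .
  qed
qed

lemma one_add_abs_shift_powr_le:
  fixes s a y \<tau> :: real
  assumes "0 \<le> s" and "0 \<le> a" and "0 \<le> y"
  shows "(1 + a + \<bar>\<tau> + a\<bar>) powr s \<le> 3 powr s * ((1 + a + y) powr s + (1 + \<bar>\<tau>\<bar>) powr s)"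
proof -
  define M where "M = max (1 + a + y) (1 + \<bar>\<tau>\<bar>)"
  have "1 + a + \<bar>\<tau> + a\<bar> \<le> 3 * M"
    using assms(2,3) by (auto simp: M_def max_def)
  then have "(1 + a + \<bar>\<tau> + a\<bar>) powr s \<le> (3 * M) powr s"
    using assms(1,2) by (intro powr_mono2) auto
  also have "\<dots> = 3 powr s * M powr s"
    using assms(2) by (simp add: M_def powr_mult)
  also have "M powr s \<le> (1 + a + y) powr s + (1 + \<bar>\<tau>\<bar>) powr s"
    by (simp add: M_def max_def)
  finally show ?thesis
    by simp
qed

definition Q1_bound_weight :: "real \<Rightarrow> real \<Rightarrow> real \<Rightarrow> real \<Rightarrow> real" where
  "Q1_bound_weight s a y \<tau> =
     (if -1/2 \<le> s \<and> s \<le> 1/2 then (1 + a + y) powr s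
      else (1 + a + y) powr s + (1 + \<bar>\<tau>\<bar>) powr s)"

lemma Q1_bound_eq_weight_mult:
  "Q1_bound s b \<xi>' \<xi>n \<tau> =
     Q1_bound_weight s ((norm \<xi>')\<^sup>2) (\<xi>n\<^sup>2) \<tau> * (1 + \<bar>\<tau> + (norm \<xi>')\<^sup>2 + \<xi>n\<^sup>2\<bar>) powr (-2 * b)"
  by (simp add: Q1_bound_def Q1_bound_weight_def)

lemma Q1_bound_weight_nonneg: "0 \<le> Q1_bound_weight s a y \<tau>"
  by (simp add: Q1_bound_weight_def)

lemma powr_mult_sqrt_weight_le_Q1_bound_weight:
  fixes s a x \<tau> :: real
  assumes "0 \<le> a" and "0 \<le> x" and "x\<^sup>2 \<le> \<bar>\<tau> + a\<bar>"
  shows "(1 + a + \<bar>\<tau> + a\<bar>) powr s * ((1 + \<bar>\<tau> + a\<bar>) powr (1/2) * x / (1 + \<bar>\<tau> + a\<bar>))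
    \<le> (1 + 3 powr s) * Q1_bound_weight s a (x\<^sup>2) \<tau>"
    (is "?A * ?W \<le> _")
proof (cases "s \<le> 1/2")
  case True
  then have "?A * ?W \<le> (1 + a + x\<^sup>2) powr s"
    using assms by (intro powr_mult_sqrt_weight_le_of_le_half) auto
  also have "\<dots> \<le> Q1_bound_weight s a (x\<^sup>2) \<tau>"
    by (simp add: Q1_bound_weight_def)
  also have "\<dots> \<le> (1 + 3 powr s) * Q1_bound_weight s a (x\<^sup>2) \<tau>"
    using Q1_bound_weight_nonneg mult_right_mono[of 1 "1 + 3 powr s"] by fastforce
  finally show ?thesis .
next
  case False
  have "?W \<le> 1"
    using assms(2,3) by (intro sqrt_weight_le_one) auto
  then have "?A * ?W \<le> ?A"
    using assms(2) mult_left_mono[of ?W 1 ?A] by simp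
  also have "\<dots> \<le> 3 powr s * Q1_bound_weight s a (x\<^sup>2) \<tau>"
    using False assms(1) one_add_abs_shift_powr_le[of s a "x\<^sup>2" \<tau>]
    by (simp add: Q1_bound_weight_def)
  also have "\<dots> \<le> (1 + 3 powr s) * Q1_bound_weight s a (x\<^sup>2) \<tau>"
    using Q1_bound_weight_nonneg by (intro mult_right_mono) auto
  finally show ?thesis .
qed

lemma multiplier_le_Q1_bound_weight_mult:
  fixes s b \<epsilon> a x \<tau> :: real
  assumes "0 \<le> a" and "0 \<le> x" and "x\<^sup>2 \<le> \<bar>\<tau> + a\<bar> / 2" and "0 \<le> b" and "\<epsilon> \<le> 1 - 2 * b"
  shows "(1 + a + \<bar>\<tau> + a\<bar>) powr s * (1 + \<bar>\<tau> + a\<bar>) powr (1/2) * x / (1 + \<bar>\<tau> + a + x\<^sup>2\<bar>) powr (2 - \<epsilon>)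
    \<le> 2 * (1 + 3 powr s) * (Q1_bound_weight s a (x\<^sup>2) \<tau> * (1 + \<bar>\<tau> + a + x\<^sup>2\<bar>) powr (-2 * b))"
proof -
  define t D where "t = \<tau> + a" and "D = 1 + \<bar>\<tau> + a + x\<^sup>2\<bar>"
  have decay: "(1 + \<bar>t\<bar>) / D powr (2 - \<epsilon>) \<le> 2 * D powr (- (2 * b))"
    using assms(3-5) one_add_abs_le_two_mult_one_add_abs_add[of "x\<^sup>2" t]
    by (intro divide_powr_le_mult_powr_uminus) (auto simp: t_def D_def)
  have "(1 + a + \<bar>t\<bar>) powr s * (1 + \<bar>t\<bar>) powr (1/2) * x / D powr (2 - \<epsilon>)
      = (1 + a + \<bar>t\<bar>) powr s * ((1 + \<bar>t\<bar>) powr (1/2) * x / (1 + \<bar>t\<bar>)) * ((1 + \<bar>t\<bar>) / D powr (2 - \<epsilon>))"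
    using abs_ge_zero[of t] by (simp add: divide_simps)
  also have "\<dots> \<le> ((1 + 3 powr s) * Q1_bound_weight s a (x\<^sup>2) \<tau>) * (2 * D powr (- (2 * b)))"
  proof (rule mult_mono[OF _ decay])
    show "(1 + a + \<bar>t\<bar>) powr s * ((1 + \<bar>t\<bar>) powr (1/2) * x / (1 + \<bar>t\<bar>))
        \<le> (1 + 3 powr s) * Q1_bound_weight s a (x\<^sup>2) \<tau>"
      unfolding t_def using assms(1-3) by (intro powr_mult_sqrt_weight_le_Q1_bound_weight) auto
  qed (simp_all add: Q1_bound_weight_nonneg add_nonneg_nonneg)
  finally show ?thesis
    by (simp add: t_def D_def algebra_simps)
qed

lemma Q1_le_Q1_bound:
  fixes s b \<epsilon> :: real
  assumes "0 \<le> b" and "\<epsilon> \<le> 1 - 2 * b"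
  shows "Q1 s \<epsilon> \<xi>' \<xi>n \<tau> \<le> 2 * (1 + 3 powr s) * Q1_bound s b \<xi>' \<xi>n \<tau>"
proof (cases "0 < \<xi>n \<and> \<xi>n\<^sup>2 \<le> \<bar>\<tau> + (norm \<xi>')\<^sup>2\<bar> / 2")
  case True
  then have "Q1 s \<epsilon> \<xi>' \<xi>n \<tau> \<le> (1 + (norm \<xi>')\<^sup>2 + \<bar>\<tau> + (norm \<xi>')\<^sup>2\<bar>) powr s
      * (1 + \<bar>\<tau> + (norm \<xi>')\<^sup>2\<bar>) powr (1/2) * \<xi>n / (1 + \<bar>\<tau> + (norm \<xi>')\<^sup>2 + \<xi>n\<^sup>2\<bar>) powr (2 - \<epsilon>)"
    by (simp add: Q1_def)
  also have "\<dots> \<le> 2 * (1 + 3 powr s) * Q1_bound s b \<xi>' \<xi>n \<tau>"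
    unfolding Q1_bound_eq_weight_mult using True assms
    by (intro multiplier_le_Q1_bound_weight_mult) auto
  finally show ?thesis .
next
  case False
  then have "Q1 s \<epsilon> \<xi>' \<xi>n \<tau> \<le> 0"
    by (auto simp: Q1_def divide_nonpos_pos mult_nonneg_nonpos)
  also have "0 \<le> 2 * (1 + 3 powr s) * Q1_bound s b \<xi>' \<xi>n \<tau>"
    by (simp add: Q1_bound_eq_weight_mult Q1_bound_weight_nonneg add_nonneg_nonneg)
  finally show ?thesis .
qed

theorem lemma5p1:
  fixes s b \<epsilon> :: real
  assumes "0 \<le> b" and "b < 1/2" and "0 < \<epsilon>" and "\<epsilon> \<le> 1 - 2 * b"
  shows "\<exists>C>0. \<forall>(\<xi>' :: real ^ 'n) (\<xi>n :: real) (\<tau> :: real).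
           Q1 s \<epsilon> \<xi>' \<xi>n \<tau> \<le> C * Q1_bound s b \<xi>' \<xi>n \<tau>"
proof (intro exI[of _ "2 * (1 + 3 powr s)"] conjI allI)
  show "0 < 2 * (1 + 3 powr s)"
    by (simp add: add_pos_nonneg)
  show "Q1 s \<epsilon> \<xi>' \<xi>n \<tau> \<le> 2 * (1 + 3 powr s) * Q1_bound s b \<xi>' \<xi>n \<tau>"
    for \<xi>' :: "real ^ 'n" and \<xi>n \<tau> :: real
    using assms(1,4) by (rule Q1_le_Q1_bound)
qed

end
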